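(* Let $H\subseteq F^7$ be the binary Hamming code of length 7 spanned by the vectors with supports $\{1,2,3\},\{1,4,5\},\{1,6,7\},\{2,4,6\}$. Let $\lambda_1:H\to\{0,1\}$ take the value $0$ exactly on $0^7$, $\{1,6,7\}$, $\{1,3,5,7\}$, $1^7$ (codewords given by supports) and $1$ on the other codewords, and let $\lambda_2:H\to\{0,1\}$ take the value $0$ exactly on $0^7$, $\{1,6,7\}$, $\{2,4,6\}$, $\{4,5,6,7\}$ and $1$ on the other codewords. Then the perfect codes $V22^1=V_H^{\lambda_1}$ and $V3^11=V_H^{\lambda_2}$ of length 15 are not transitive, where $V_H^\lambda=\{(x+y,\ |x|+\lambda(y),\ x)\mid x\in F^7,\ y\in H\}$.
   Context: $|x|=x_1+\dots+x_7\pmod 2$. The automorphism group of a code $C\subseteq F^m$ is $\mathrm{Aut}(C)=\{(y,\pi)\mid y\in F^m,\ \pi\in S_m,\ y+\pi(C)=C\}$, where permutations act by permuting coordinates. A code $C$ is transitive if $\mathrm{Aut}(C)$ has a subgroup acting transitively on the codewords of $C$; equivalently, for every $y\in C$ there is $\pi\in S_m$ with $y+\pi(C)=C$. *)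

theory Defs
  imports "HOL-Combinatorics.Permutations"
begin

text \<open>Binary words of length m are bool lists of length m (True = 1).
  Coordinate i (1-based in the paper) is list index i - 1.\<close>

definition vadd :: "bool list \<Rightarrow> bool list \<Rightarrow> bool list" where
  "vadd x y = map2 (\<lambda>a b. a \<noteq> b) x y"

definition wt :: "bool list \<Rightarrow> bool" where
  "wt x = odd (length (filter id x))"

text \<open>Permutation acting on coordinates: coordinate i is moved to position pi i.\<close>
definition perm_word :: "(nat \<Rightarrow> nat) \<Rightarrow> bool list \<Rightarrow> bool list" where
  "perm_word \<pi> x = map (\<lambda>j. x ! (inv \<pi> j)) [0..<length x]"

definition Aut :: "nat \<Rightarrow> bool list set \<Rightarrow> (bool list \<times> (nat \<Rightarrow> nat)) set" where
  "Aut m C = {(y, \<pi>). length y = m \<and> \<pi> permutes {0..<m} \<and>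
                (\<lambda>x. vadd y (perm_word \<pi> x)) ` C = C}"

text \<open>C is transitive if Aut(C) has a subgroup acting transitively on C
  (equivalently Aut(C) itself acts transitively on the codewords).\<close>
definition transitive_code :: "nat \<Rightarrow> bool list set \<Rightarrow> bool" where
  "transitive_code m C \<longleftrightarrow>
     (\<forall>c1\<in>C. \<forall>c2\<in>C. \<exists>(y, \<pi>)\<in>Aut m C. vadd y (perm_word \<pi> c1) = c2)"

definition word_of_support :: "nat \<Rightarrow> nat set \<Rightarrow> bool list" where
  "word_of_support m S = map (\<lambda>i. Suc i \<in> S) [0..<m]"

abbreviation w7 :: "nat set \<Rightarrow> bool list" where
  "w7 S \<equiv> word_of_support 7 S"

definition hamming7 :: "bool list set" where
  "hamming7 = {foldr vadd
                 [if a1 then w7 {1,2,3} else w7 {},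
                  if a2 then w7 {1,4,5} else w7 {},
                  if a3 then w7 {1,6,7} else w7 {},
                  if a4 then w7 {2,4,6} else w7 {}] (w7 {}) | a1 a2 a3 a4. True}"

definition lambda1 :: "bool list \<Rightarrow> bool" where
  "lambda1 y = (y \<notin> {w7 {}, w7 {1,6,7}, w7 {1,3,5,7}, w7 {1,2,3,4,5,6,7}})"

definition lambda2 :: "bool list \<Rightarrow> bool" where
  "lambda2 y = (y \<notin> {w7 {}, w7 {1,6,7}, w7 {2,4,6}, w7 {4,5,6,7}})"

definition V_code :: "nat \<Rightarrow> bool list set \<Rightarrow> (bool list \<Rightarrow> bool) \<Rightarrow> bool list set" where
  "V_code n H lam = {vadd x y @ [wt x \<noteq> lam y] @ x | x y. length x = n \<and> y \<in> H}"

end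

theory Submission
  imports Defs
begin

text \<open>If \<open>(y, \<pi>) \<in> Aut(C)\<close> maps the codeword \<open>c\<close> to \<open>c'\<close>, then \<open>y + \<pi>(c + u) = c' + \<pi> u\<close>, so
  \<open>(u, v) \<mapsto> (\<pi> u, \<pi> v)\<close> maps the pairs of weight-\<open>k\<close> words \<open>u, v\<close> with
  \<open>c + u, c + v, c + u + v \<in> C\<close> injectively to the corresponding pairs for \<open>c'\<close>. So the number
  of such pairs is the same at all codewords of a transitive code. For both codes and \<open>k = 3\<close>
  the zero word and the codeword with support \<open>{5,7,8,9,11,12,13,14,15}\<close> give different
  numbers (777 and 905 for \<open>\<lambda>\<^sub>1\<close>, 841 and 969 for \<open>\<lambda>\<^sub>2\<close>), which is checked by evaluation.\<close>

lemma length_vadd [simp]: "length (vadd x y) = min (length x) (length y)"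
  by (simp add: vadd_def)

lemma nth_vadd [simp]: "i < length x \<Longrightarrow> i < length y \<Longrightarrow> vadd x y ! i = (x ! i \<noteq> y ! i)"
  by (simp add: vadd_def)

lemma vadd_assoc: "vadd (vadd x y) z = vadd x (vadd y z)"
  by (rule nth_equalityI) auto

lemma vadd_comm: "vadd x y = vadd y x"
  by (rule nth_equalityI) auto

lemma vadd_vadd_cancel: "length x \<le> length y \<Longrightarrow> vadd y (vadd y x) = x"
  by (rule nth_equalityI) auto

lemma vadd_cancel_right: "length x \<le> length y \<Longrightarrow> vadd (vadd y x) y = x"
  by (rule nth_equalityI) auto

lemma perm_word_eq_permute_list: "perm_word \<pi> x = permute_list (inv \<pi>) x"
  by (simp add: perm_word_def permute_list_def)

lemma length_perm_word [simp]: "length (perm_word \<pi> x) = length x"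
  by (simp add: perm_word_def)

lemma perm_word_vadd:
  assumes "\<pi> permutes {..<length x}" "length y = length x"
  shows "perm_word \<pi> (vadd x y) = vadd (perm_word \<pi> x) (perm_word \<pi> y)"
proof (rule nth_equalityI)
  fix j assume "j < length (perm_word \<pi> (vadd x y))"
  then have "inv \<pi> j < length x"
    using permutes_in_image[OF permutes_inv[OF assms(1)]] assms(2) by simp
  then show "perm_word \<pi> (vadd x y) ! j = vadd (perm_word \<pi> x) (perm_word \<pi> y) ! j"
    using \<open>j < length (perm_word \<pi> (vadd x y))\<close> assms(2) by (simp add: perm_word_def)
qed (use assms in simp)

lemma permute_list_perm_word:
  assumes "\<pi> permutes {..<length x}"
  shows "permute_list \<pi> (perm_word \<pi> x) = x"
  using permute_list_compose[OF assms, of "inv \<pi>"] permutes_inv_o(2)[OF assms]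
  by (simp add: perm_word_eq_permute_list)

lemma inj_on_perm_word:
  assumes "\<pi> permutes {..<n}"
  shows "inj_on (perm_word \<pi>) {x. length x = n}"
  using assms by (intro inj_on_inverseI[where g = "permute_list \<pi>"]) (auto simp: permute_list_perm_word)

lemma count_list_perm_word:
  assumes "\<pi> permutes {..<length x}"
  shows "count_list (perm_word \<pi> x) a = count_list x a"
  unfolding perm_word_eq_permute_list
  by (rule mset_eq_length_filter) (simp add: assms permutes_inv)

definition sphere_pairs :: "nat \<Rightarrow> nat \<Rightarrow> bool list set \<Rightarrow> bool list \<Rightarrow> (bool list \<times> bool list) set" where
  "sphere_pairs n k C c =
     {(u, v). length u = n \<and> length v = n \<and> count_list u True = k \<and> count_list v True = k \<and>
              vadd c u \<in> C \<and> vadd c v \<in> C \<and> vadd c (vadd u v) \<in> C}"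

fun words_of_weight :: "nat \<Rightarrow> nat \<Rightarrow> bool list list" where
  "words_of_weight 0 k = (if k = 0 then [[]] else [])"
| "words_of_weight (Suc n) k =
     map (Cons False) (words_of_weight n k) @
     (if k = 0 then [] else map (Cons True) (words_of_weight n (k - 1)))"

lemma set_words_of_weight: "set (words_of_weight n k) = {u. length u = n \<and> count_list u True = k}"
proof (induction n arbitrary: k)
  case 0
  then show ?case by auto
next
  case (Suc n)
  show ?case
  proof (rule set_eqI)
    fix u
    show "u \<in> set (words_of_weight (Suc n) k) \<longleftrightarrow> u \<in> {u. length u = Suc n \<and> count_list u True = k}"
      by (cases u) (auto simp: Suc)
  qed
qed

lemma distinct_words_of_weight: "distinct (words_of_weight n k)"
  by (induction n arbitrary: k) (auto simp: distinct_map)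

lemma finite_sphere_pairs: "finite (sphere_pairs n k C c)"
proof (rule finite_subset)
  show "sphere_pairs n k C c \<subseteq> set (words_of_weight n k) \<times> set (words_of_weight n k)"
    by (auto simp: sphere_pairs_def set_words_of_weight)
qed simp

lemma card_sphere_pairs_le:
  assumes aut: "(y, \<pi>) \<in> Aut n C" and c: "length c = n"
  shows "card (sphere_pairs n k C c) \<le> card (sphere_pairs n k C (vadd y (perm_word \<pi> c)))"
proof -
  define \<sigma> where "\<sigma> x = vadd y (perm_word \<pi> x)" for x
  have y: "length y = n" and \<pi>: "\<pi> permutes {..<n}" and \<sigma>C: "\<sigma> ` C = C"
    using aut by (auto simp: Aut_def \<sigma>_def atLeast0LessThan)
  have \<sigma>_vadd: "\<sigma> (vadd c u) = vadd (\<sigma> c) (perm_word \<pi> u)" if "length u = n" for u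
    using that c y \<pi> by (simp add: \<sigma>_def perm_word_vadd vadd_assoc)
  have "map_prod (perm_word \<pi>) (perm_word \<pi>) ` sphere_pairs n k C c \<subseteq> sphere_pairs n k C (\<sigma> c)"
  proof clarify
    fix u v assume "(u, v) \<in> sphere_pairs n k C c"
    then have uv: "length u = n" "length v = n" "count_list u True = k" "count_list v True = k"
      and "vadd c u \<in> C" "vadd c v \<in> C" "vadd c (vadd u v) \<in> C"
      by (auto simp: sphere_pairs_def)
    then have "\<sigma> (vadd c u) \<in> C" "\<sigma> (vadd c v) \<in> C" "\<sigma> (vadd c (vadd u v)) \<in> C"
      using \<sigma>C by blast+
    then show "(perm_word \<pi> u, perm_word \<pi> v) \<in> sphere_pairs n k C (\<sigma> c)"
      using uv \<pi> by (simp add: sphere_pairs_def \<sigma>_vadd perm_word_vadd count_list_perm_word)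
  qed
  moreover have "inj_on (map_prod (perm_word \<pi>) (perm_word \<pi>)) (sphere_pairs n k C c)"
  proof (rule inj_on_subset)
    show "inj_on (map_prod (perm_word \<pi>) (perm_word \<pi>)) ({x. length x = n} \<times> {x. length x = n})"
      using inj_on_perm_word[OF \<pi>] inj_on_perm_word[OF \<pi>] by (rule map_prod_inj_on)
  qed (auto simp: sphere_pairs_def)
  ultimately show ?thesis
    unfolding \<sigma>_def by (intro card_inj_on_le finite_sphere_pairs)
qed

lemma not_transitive_codeI:
  assumes "c \<in> C" "c' \<in> C" "length c = n"
    and "card (sphere_pairs n k C c') < card (sphere_pairs n k C c)"
  shows "\<not> transitive_code n C"
proof
  assume "transitive_code n C"
  then obtain y \<pi> where "(y, \<pi>) \<in> Aut n C" "vadd y (perm_word \<pi> c) = c'"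
    using assms(1,2) unfolding transitive_code_def by blast
  then show False
    using card_sphere_pairs_le[of y \<pi> n C c k] assms(3,4) by simp
qed

lemma length_filter_product:
  "length (filter (\<lambda>(u, v). R u v) (List.product A B)) = (\<Sum>u\<leftarrow>A. length (filter (R u) B))"
  by (induction A) (auto simp: filter_map o_def)

lemma card_sphere_pairs_eq:
  assumes "\<And>z. z \<in> C \<longleftrightarrow> P z"
  shows "card (sphere_pairs n k C c) =
     (let L = filter (\<lambda>u. P (vadd c u)) (words_of_weight n k)
      in \<Sum>u\<leftarrow>L. length (filter (\<lambda>v. P (vadd c (vadd u v))) L))"
proof -
  define L where "L = filter (\<lambda>u. P (vadd c u)) (words_of_weight n k)"
  define Q where "Q = filter (\<lambda>(u, v). P (vadd c (vadd u v))) (List.product L L)"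
  have "sphere_pairs n k C c = set Q"
    by (auto simp: sphere_pairs_def Q_def L_def set_words_of_weight assms)
  moreover have "distinct Q"
    by (simp add: Q_def L_def distinct_product distinct_words_of_weight)
  moreover have "length Q = (\<Sum>u\<leftarrow>L. length (filter (\<lambda>v. P (vadd c (vadd u v))) L))"
    unfolding Q_def by (rule length_filter_product)
  ultimately show ?thesis
    by (simp add: distinct_card flip: L_def)
qed

lemma mem_V_code_iff:
  assumes "\<forall>y\<in>H. length y = n"
  shows "z \<in> V_code n H lam \<longleftrightarrow>
    length z = 2 * n + 1 \<and> vadd (take n z) (drop (Suc n) z) \<in> H \<and>
    z ! n = (wt (drop (Suc n) z) \<noteq> lam (vadd (take n z) (drop (Suc n) z)))"
proof
  assume "z \<in> V_code n H lam"
  then obtain x y where z: "z = vadd x y @ [wt x \<noteq> lam y] @ x" and x: "length x = n" and y: "y \<in> H"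
    by (auto simp: V_code_def)
  moreover have "length y = n" using assms y by blast
  ultimately show "length z = 2 * n + 1 \<and> vadd (take n z) (drop (Suc n) z) \<in> H \<and>
    z ! n = (wt (drop (Suc n) z) \<noteq> lam (vadd (take n z) (drop (Suc n) z)))"
    by (simp add: nth_append vadd_cancel_right)
next
  assume z: "length z = 2 * n + 1 \<and> vadd (take n z) (drop (Suc n) z) \<in> H \<and>
    z ! n = (wt (drop (Suc n) z) \<noteq> lam (vadd (take n z) (drop (Suc n) z)))"
  define x where "x = drop (Suc n) z"
  define y where "y = vadd (take n z) x"
  have y_comm: "y = vadd x (take n z)"
    unfolding y_def by (rule vadd_comm)
  have "z = take n z @ [z ! n] @ x"
    using id_take_nth_drop[of n z] z by (simp add: x_def)
  also have "take n z = vadd x y"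
    using z by (simp add: y_comm x_def vadd_vadd_cancel)
  finally have "z = vadd x y @ [wt x \<noteq> lam y] @ x"
    using z by (simp add: x_def y_def)
  moreover have "length x = n" "y \<in> H"
    using z by (simp_all add: x_def y_def)
  ultimately show "z \<in> V_code n H lam"
    unfolding V_code_def by blast
qed

lemma length_word_of_support [simp]: "length (word_of_support m S) = m"
  by (simp add: word_of_support_def)

lemma length_foldr_vadd: "\<forall>w\<in>set ws. length w = length v \<Longrightarrow> length (foldr vadd ws v) = length v"
  by (induction ws) auto

lemma length_hamming7: "\<forall>y\<in>hamming7. length y = 7"
  unfolding hamming7_def by clarify (simp add: length_foldr_vadd)

lemma set_bool_comprehension4:
  "{f a b c d | a b c d. True} =
   set [f a b c d. a \<leftarrow> [False, True], b \<leftarrow> [False, True], c \<leftarrow> [False, True], d \<leftarrow> [False, True]]"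
  (is "_ = set ?enum")
proof
  show "{f a b c d | a b c d. True} \<subseteq> set ?enum"
  proof clarify
    fix a b c d :: bool
    show "f a b c d \<in> set ?enum"
      by (cases a; cases b; cases c; cases d) simp_all
  qed
qed auto

text \<open>Evaluating the code to an explicit list once makes the thousands of membership tests in
  the counts below compare against ready-made words.\<close>

schematic_goal hamming7_eval: "hamming7 = set ?H"
  unfolding hamming7_def set_bool_comprehension4 by (rule arg_cong[where f = set]) code_simp

lemma mem_V_code_hamming7:
  "z \<in> V_code 7 hamming7 lam \<longleftrightarrow>
    length z = 15 \<and> vadd (take 7 z) (drop 8 z) \<in> hamming7 \<and>
    z ! 7 = (wt (drop 8 z) \<noteq> lam (vadd (take 7 z) (drop 8 z)))"
  using mem_V_code_iff[OF length_hamming7] by simp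

abbreviation w15 :: "nat set \<Rightarrow> bool list" where
  "w15 S \<equiv> word_of_support 15 S"

lemma V_code_witnesses:
  "w15 {} \<in> V_code 7 hamming7 lambda1" "w15 {5, 7, 8, 9, 11, 12, 13, 14, 15} \<in> V_code 7 hamming7 lambda1"
  "w15 {} \<in> V_code 7 hamming7 lambda2" "w15 {5, 7, 8, 9, 11, 12, 13, 14, 15} \<in> V_code 7 hamming7 lambda2"
  unfolding mem_V_code_hamming7 unfolding hamming7_eval by code_simp+

lemma card_sphere_pairs_lambda1_zero:
  "card (sphere_pairs 15 3 (V_code 7 hamming7 lambda1) (w15 {})) = 777"
  unfolding card_sphere_pairs_eq[OF mem_V_code_hamming7] unfolding hamming7_eval by code_simp

lemma card_sphere_pairs_lambda1_witness:
  "card (sphere_pairs 15 3 (V_code 7 hamming7 lambda1) (w15 {5, 7, 8, 9, 11, 12, 13, 14, 15})) = 905"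
  unfolding card_sphere_pairs_eq[OF mem_V_code_hamming7] unfolding hamming7_eval by code_simp

lemma card_sphere_pairs_lambda2_zero:
  "card (sphere_pairs 15 3 (V_code 7 hamming7 lambda2) (w15 {})) = 841"
  unfolding card_sphere_pairs_eq[OF mem_V_code_hamming7] unfolding hamming7_eval by code_simp

lemma card_sphere_pairs_lambda2_witness:
  "card (sphere_pairs 15 3 (V_code 7 hamming7 lambda2) (w15 {5, 7, 8, 9, 11, 12, 13, 14, 15})) = 969"
  unfolding card_sphere_pairs_eq[OF mem_V_code_hamming7] unfolding hamming7_eval by code_simp

theorem lemma4:
  shows "\<not> transitive_code 15 (V_code 7 hamming7 lambda1) \<and>
         \<not> transitive_code 15 (V_code 7 hamming7 lambda2)"
proof
  show "\<not> transitive_code 15 (V_code 7 hamming7 lambda1)"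
    by (rule not_transitive_codeI[where k = 3, OF V_code_witnesses(2,1)])
      (simp_all add: card_sphere_pairs_lambda1_zero card_sphere_pairs_lambda1_witness)
  show "\<not> transitive_code 15 (V_code 7 hamming7 lambda2)"
    by (rule not_transitive_codeI[where k = 3, OF V_code_witnesses(4,3)])
      (simp_all add: card_sphere_pairs_lambda2_zero card_sphere_pairs_lambda2_witness)
qed

end
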